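(* Let $d\ge1$ and let $\varphi^1,\dots,\varphi^{d+1}\in\mathbb{R}^d$ satisfy $\|\varphi^j\|_2=1$ for all $j$ (Euclidean norm) and $\langle\varphi^i,\varphi^j\rangle=-\frac1d$ for all $1\le i\neq j\le d+1$. Let $B_2=\{x\in\mathbb{R}^d:\|x\|_2\le1\}$ and $B^o_2(x)=\{y:\|y-x\|_2<1\}$. Then there exists $a>0$ such that $$B_2\subset\bigcup_{j=1}^{d+1}B^o_2(a\varphi^j).$$ *)

theory Defs
  imports "HOL-Analysis.Analysis"
begin

end

theory Submission
  imports Defs
begin

text \<open>
  Any \<open>d\<close> of the \<open>d + 1\<close> vectors are linearly independent (their Gram matrix is
  \<open>(1 + 1/d) Id - (1/d) J\<close>), so they span \<open>\<real>\<^sup>d\<close>; testing against each vertex then shows that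
  they sum to zero and form a tight frame, \<open>x = d/(d+1) \<Sum>\<^sub>j \<langle>x, \<phi>\<^sub>j\<rangle> \<phi>\<^sub>j\<close>.  The coefficients
  \<open>t\<^sub>j = \<langle>x, \<phi>\<^sub>j\<rangle>\<close> therefore sum to zero, are bounded by \<open>|x|\<close>, and satisfy
  \<open>\<Sum>\<^sub>j t\<^sub>j\<^sup>2 = (d+1)/d |x|\<^sup>2\<close>; this forces \<open>max\<^sub>j t\<^sub>j \<ge> |x|/(2d)\<close>.  Expanding
  \<open>|x - a \<phi>\<^sub>j|\<^sup>2\<close> for that \<open>j\<close> shows that \<open>a = 1/(2d)\<close> works.
\<close>

lemma sum_squares_le_of_sum_eq_0:
  fixes t :: "'i \<Rightarrow> real"
  assumes "finite I" and sum0: "(\<Sum>j\<in>I. t j) = 0"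
    and bound: "\<And>j. j \<in> I \<Longrightarrow> \<bar>t j\<bar> \<le> r" and upper: "\<And>j. j \<in> I \<Longrightarrow> t j \<le> s"
    and "0 \<le> s"
  shows "(\<Sum>j\<in>I. (t j)\<^sup>2) \<le> 2 * r * s * card I"
proof -
  \<comment> \<open>\<open>t\<^sup>2 \<le> r |t|\<close> and \<open>|t| = 2 max t 0 - t\<close>, where the \<open>- t\<close> terms sum to zero\<close>
  have "(\<Sum>j\<in>I. (t j)\<^sup>2) \<le> (\<Sum>j\<in>I. r * \<bar>t j\<bar>)"
    by (intro sum_mono) (metis abs_ge_zero abs_mult_self_eq bound mult_right_mono power2_eq_square)
  also have "\<dots> = (\<Sum>j\<in>I. 2 * r * max (t j) 0 - r * t j)"
    by (intro sum.cong) (auto simp: max_def)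
  also have "\<dots> = (\<Sum>j\<in>I. 2 * r * max (t j) 0) - r * (\<Sum>j\<in>I. t j)"
    by (simp add: sum_subtractf sum_distrib_left)
  also have "\<dots> = (\<Sum>j\<in>I. 2 * r * max (t j) 0)"
    using sum0 by simp
  also have "\<dots> \<le> (\<Sum>j\<in>I. 2 * r * s)"
  proof (intro sum_mono)
    fix j assume "j \<in> I"
    then show "2 * r * max (t j) 0 \<le> 2 * r * s"
      using bound[of j] upper[of j] \<open>0 \<le> s\<close> by (intro mult_left_mono) auto
  qed
  finally show ?thesis
    by (simp add: ac_simps)
qed

lemma norm_diff_scaleR_lt_1:
  fixes x u :: "'a::real_inner"
  assumes "norm u = 1" and "norm x \<le> 1" and "0 < c" and "c \<le> 1/2"
    and "c * norm x \<le> inner x u"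
  shows "norm (x - c *\<^sub>R u) < 1"
proof -
  have "(norm (x - c *\<^sub>R u))\<^sup>2 = (norm x)\<^sup>2 - 2 * c * inner x u + c\<^sup>2"
    using assms(1)[unfolded norm_eq_1] unfolding power2_norm_eq_inner
    by (simp add: inner_commute power2_eq_square algebra_simps)
  also have "\<dots> \<le> (norm x)\<^sup>2 - 2 * c\<^sup>2 * norm x + c\<^sup>2"
    using assms(3,5) by (simp add: power2_eq_square)
  also have "\<dots> \<le> norm x * (1 - 2 * c\<^sup>2) + c\<^sup>2"
    using assms(2) by (simp add: power2_eq_square algebra_simps mult_left_le_one_le)
  also have "\<dots> \<le> 1 - c\<^sup>2"
  proof -
    have "2 * c\<^sup>2 \<le> 1"
      using assms(3,4) mult_mono[of c "1/2" c "1/2"] by (simp add: power2_eq_square)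
    then show ?thesis
      using assms(2) mult_left_le_one_le[of "1 - 2 * c\<^sup>2" "norm x"] by simp
  qed
  also have "\<dots> < 1"
    using assms(3) by simp
  finally show ?thesis
    by (simp add: power_less_one_iff)
qed

locale regular_simplex =
  fixes d :: nat and I :: "'i set" and v :: "'i \<Rightarrow> 'a::euclidean_space"
  assumes dim_eq: "DIM('a) = d"
    and finite_I: "finite I" and card_I: "card I = d + 1"
    and norm_vertex: "\<And>j. j \<in> I \<Longrightarrow> norm (v j) = 1"
    and inner_vertices: "\<And>i j. i \<in> I \<Longrightarrow> j \<in> I \<Longrightarrow> i \<noteq> j \<Longrightarrow> inner (v i) (v j) = - 1 / real d"
begin

lemma d_pos: "0 < d"
  using DIM_positive dim_eq by metis

lemma inner_sum_vertex:
  assumes "J \<subseteq> I" and "k \<in> J"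
  shows "inner (\<Sum>j\<in>J. c j *\<^sub>R v j) (v k) = c k - (\<Sum>j\<in>J - {k}. c j) / real d"
proof -
  have "finite J"
    using assms(1) finite_I finite_subset by blast
  have "inner (\<Sum>j\<in>J. c j *\<^sub>R v j) (v k) = c k * inner (v k) (v k) + (\<Sum>j\<in>J - {k}. c j * inner (v j) (v k))"
    using \<open>finite J\<close> assms(2) by (subst inner_sum_left) (simp add: sum.remove)
  also have "(\<Sum>j\<in>J - {k}. c j * inner (v j) (v k)) = (\<Sum>j\<in>J - {k}. - c j / real d)"
    using assms inner_vertices[of _ k] by (intro sum.cong) (auto simp: subset_iff)
  also have "inner (v k) (v k) = 1"
    using assms norm_vertex[of k] by (auto simp: norm_eq_1)
  finally show ?thesis
    by (simp add: sum_negf sum_divide_distrib)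
qed

lemma inj_on_vertices: "inj_on v I"
proof (rule inj_onI, rule ccontr)
  fix i j assume ij: "i \<in> I" "j \<in> I" "v i = v j" "i \<noteq> j"
  then have "inner (v i) (v j) = 1"
    using norm_vertex[of i] by (simp add: norm_eq_1)
  moreover have "inner (v i) (v j) < 0"
    using inner_vertices[OF ij(1,2,4)] d_pos by simp
  ultimately show False
    by simp
qed

lemma independent_vertices_Diff:
  assumes "k \<in> I"
  shows "independent (v ` (I - {k}))"
proof (rule independent_if_scalars_zero)
  let ?J = "I - {k}"
  have inj: "inj_on v ?J"
    using inj_on_vertices by (rule inj_on_subset) auto
  show "finite (v ` ?J)"
    using finite_I by simp
  fix u w
  assume "(\<Sum>x\<in>v ` ?J. u x *\<^sub>R x) = 0" and "w \<in> v ` ?J"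
  \<comment> \<open>pairing the relation with each \<open>v j\<close> forces all coefficients to equal \<open>S / (d + 1)\<close>\<close>
  define c where "c i = u (v i)" for i
  define S where "S = (\<Sum>i\<in>?J. c i)"
  have sum_0: "(\<Sum>i\<in>?J. c i *\<^sub>R v i) = 0"
    using \<open>(\<Sum>x\<in>v ` ?J. u x *\<^sub>R x) = 0\<close> unfolding sum.reindex[OF inj] c_def by (simp add: o_def)
  have c_eq: "c j = S / (real d + 1)" if "j \<in> ?J" for j
  proof -
    have "(\<Sum>i\<in>?J - {j}. c i) = S - c j"
      using that finite_I by (simp add: S_def sum_diff1)
    then have "c j - (S - c j) / real d = 0"
      using inner_sum_vertex[of ?J j c] that sum_0 by simp
    then have "c j * (real d + 1) = S"
      using d_pos by (simp add: field_simps)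
    then show ?thesis
      by (simp add: field_simps)
  qed
  have "(\<Sum>i\<in>?J. c i) = (\<Sum>i\<in>?J. S / (real d + 1))"
    by (rule sum.cong) (simp_all add: c_eq)
  then have "S = 0"
    using assms finite_I card_I unfolding S_def[symmetric] by (simp add: field_simps)
  then show "u w = 0"
    using \<open>w \<in> v ` ?J\<close> c_eq by (auto simp: c_def)
qed

lemma span_vertices: "span (v ` I) = UNIV"
proof -
  obtain k where "k \<in> I"
    using card_I by fastforce
  have "card (v ` (I - {k})) = d"
    using inj_on_vertices finite_I card_I \<open>k \<in> I\<close> by (subst card_image) (auto intro: inj_on_subset)
  then have "UNIV \<subseteq> span (v ` (I - {k}))"
    using card_ge_dim_independent[OF _ independent_vertices_Diff[OF \<open>k \<in> I\<close>], of UNIV] dim_eq by auto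
  then show ?thesis
    by (metis Diff_subset image_mono span_mono top.extremum_uniqueI)
qed

lemma orthogonal_vertices_imp_eq_0:
  assumes "\<And>k. k \<in> I \<Longrightarrow> inner x (v k) = 0"
  shows "x = 0"
proof -
  have "orthogonal x x"
    using assms span_vertices by (intro orthogonal_to_span[of x "v ` I"]) (auto simp: orthogonal_def)
  then show ?thesis
    by (simp add: orthogonal_def)
qed

lemma sum_vertices: "(\<Sum>j\<in>I. v j) = 0"
proof (rule orthogonal_vertices_imp_eq_0)
  fix k assume k: "k \<in> I"
  have "inner (\<Sum>j\<in>I. 1 *\<^sub>R v j) (v k) = 1 - real (card (I - {k})) / real d"
    using inner_sum_vertex[of I k "\<lambda>_. 1"] k by simp
  also have "\<dots> = 0"
    using k d_pos finite_I card_I by simp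
  finally show "inner (\<Sum>j\<in>I. v j) (v k) = 0"
    by simp
qed

lemma sum_inner_vertices: "(\<Sum>j\<in>I. inner x (v j)) = 0"
  using sum_vertices by (simp add: inner_sum_right[symmetric])

lemma vertex_expansion: "x = (real d / (real d + 1)) *\<^sub>R (\<Sum>j\<in>I. inner x (v j) *\<^sub>R v j)"
  (is "x = ?y")
proof -
  have "inner (x - ?y) (v k) = 0" if k: "k \<in> I" for k
  proof -
    have "(\<Sum>j\<in>I - {k}. inner x (v j)) = - inner x (v k)"
      using sum_inner_vertices[of x] k finite_I by (simp add: sum_diff1)
    then have "inner ?y (v k) = (real d / (real d + 1)) * (inner x (v k) + inner x (v k) / real d)"
      using inner_sum_vertex[of I k] k by simp
    also have "inner x (v k) + inner x (v k) / real d = inner x (v k) * (real d + 1) / real d"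
      using d_pos by (simp add: field_simps)
    also have "(real d / (real d + 1)) * \<dots> = inner x (v k)"
      using d_pos by simp
    finally show ?thesis
      by (simp add: inner_diff_left)
  qed
  then show ?thesis
    using orthogonal_vertices_imp_eq_0[of "x - ?y"] by simp
qed

lemma sum_inner_vertices_squared: "(\<Sum>j\<in>I. (inner x (v j))\<^sup>2) = (real d + 1) / real d * (norm x)\<^sup>2"
proof -
  have "(norm x)\<^sup>2 = inner x x"
    by (simp add: power2_norm_eq_inner)
  also have "\<dots> = (real d / (real d + 1)) * (\<Sum>j\<in>I. (inner x (v j))\<^sup>2)"
    by (subst (2) vertex_expansion) (simp add: inner_sum_right power2_eq_square)
  finally show ?thesis
    using d_pos by (simp add: field_simps)
qed

lemma exists_vertex_inner_ge: "\<exists>j\<in>I. norm x / (2 * real d) \<le> inner x (v j)"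
proof -
  define t where "t j = inner x (v j)" for j
  define s where "s = Max (t ` I)"
  have "I \<noteq> {}"
    using card_I by auto
  have "s \<in> t ` I"
    using finite_I \<open>I \<noteq> {}\<close> by (simp add: s_def)
  then obtain j where "j \<in> I" "t j = s"
    by auto
  have upper: "t i \<le> s" if "i \<in> I" for i
    using finite_I that by (simp add: s_def)
  have "0 \<le> s"
    using sum_bounded_above[of I t s] upper sum_inner_vertices[of x] card_I
    by (simp add: t_def zero_le_mult_iff)
  have bound: "\<bar>t i\<bar> \<le> norm x" if "i \<in> I" for i
    using Cauchy_Schwarz_ineq2[of x "v i"] norm_vertex[OF that] by (simp add: t_def)
  have "(real d + 1) / real d * (norm x)\<^sup>2 \<le> 2 * norm x * s * (real d + 1)"
    using sum_squares_le_of_sum_eq_0[of I t "norm x" s, OF finite_I _ bound upper \<open>0 \<le> s\<close>]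
      sum_inner_vertices[of x] sum_inner_vertices_squared[of x] card_I by (simp add: t_def add.commute)
  also have "\<dots> = (real d + 1) / real d * (norm x * (2 * real d * s))"
    using d_pos by simp
  finally have "(norm x)\<^sup>2 \<le> norm x * (2 * real d * s)"
    by (rule mult_left_le_imp_le) (use d_pos in simp)
  then have "norm x \<le> 2 * real d * s"
    using \<open>0 \<le> s\<close> by (cases "x = 0") (auto simp: power2_eq_square)
  then show ?thesis
    using \<open>j \<in> I\<close> \<open>t j = s\<close> d_pos by (auto simp: t_def field_simps)
qed

lemma cball_subset_Union_ball_vertices:
  "cball 0 1 \<subseteq> (\<Union>j\<in>I. ball ((1 / (2 * real d)) *\<^sub>R v j) 1)"
proof
  fix x :: 'a assume "x \<in> cball 0 1"
  obtain j where "j \<in> I" and j: "norm x / (2 * real d) \<le> inner x (v j)"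
    using exists_vertex_inner_ge by blast
  have "norm (x - (1 / (2 * real d)) *\<^sub>R v j) < 1"
    using \<open>x \<in> cball 0 1\<close> norm_vertex[OF \<open>j \<in> I\<close>] j d_pos
    by (intro norm_diff_scaleR_lt_1) auto
  then show "x \<in> (\<Union>j\<in>I. ball ((1 / (2 * real d)) *\<^sub>R v j) 1)"
    using \<open>j \<in> I\<close> by (auto simp: dist_norm norm_minus_commute)
qed

end

theorem proposition3p4:
  fixes \<phi> :: "nat \<Rightarrow> real ^ 'n"
  assumes unit: "\<And>j. j \<in> {1..CARD('n) + 1} \<Longrightarrow> norm (\<phi> j) = 1"
    and inner: "\<And>i j. i \<in> {1..CARD('n) + 1} \<Longrightarrow> j \<in> {1..CARD('n) + 1} \<Longrightarrow> i \<noteq> j \<Longrightarrow>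
        inner (\<phi> i) (\<phi> j) = - 1 / real CARD('n)"
  shows "\<exists>a::real. a > 0 \<and> cball 0 1 \<subseteq> (\<Union>j\<in>{1..CARD('n) + 1}. ball (a *\<^sub>R \<phi> j) 1)"
proof -
  interpret regular_simplex "CARD('n)" "{1..CARD('n) + 1}" \<phi>
    using unit inner by unfold_locales simp_all
  show ?thesis
  proof (intro exI conjI)
    show "1 / (2 * real CARD('n)) > 0"
      using d_pos by simp
  qed (rule cball_subset_Union_ball_vertices)
qed

end
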